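(* For every pair of finite sets $W=\{w_1,\dots,w_n\}$, $F=\{f_1,\dots,f_m\}$ (with $n,m\ge 1$), every preference profile $\succcurlyeq$ and every ranking $\bm r$ of $W\cup F$, the matching matrix $\bm M_{\bm r}$ produced by serial dictatorship with ranking $\bm r$ on $\succcurlyeq$ satisfies $irv(\bm M_{\bm r},\succcurlyeq)\le 1/2$.
   Context: Let $\perp$ be the unmatched option; workers have linear-order preferences $\succcurlyeq_{w}$ on $F\cup\{\perp\}$, firms linear-order preferences $\succcurlyeq_f$ on $W\cup\{\perp\}$; $b\succ_a b'$ means $b\ne b'$ and $b\succcurlyeq_a b'$. A matching pairs agents one-to-one across the two sides, each agent being matched to one agent of the other side or unmatched. Its matching matrix $\bm M\in\{0,1\}^{(n+1)\times(m+1)}$ has, for $i\le n,j\le m$, $M_{ij}=1$ iff $w_i$ is matched to $f_j$, $M_{i,m+1}=1$ iff $w_i$ is unmatched, $M_{n+1,j}=1$ iff $f_j$ is unmatched, and $M_{n+1,m+1}=0$. Serial dictatorship with ranking $\bm r=(r_1,\dots,r_{n+m})$ (an ordering of $W\cup F$): for $k=1,\dots,n+m$, if $r_k$ is not yet matched, $r_k$ is assigned its most preferred option among $\perp$ and the not-yet-matched agents of the other side (and that agent, if any, becomes matched with $r_k$). For a profile $\succcurlyeq$ define, for $i\in[n],j\in[m]$, $p_{ij}=\frac1m\big(\mathbb I[f_j\succ_{w_i}\perp]+\sum_{j''=1}^m(\mathbb I[f_j\succ_{w_i}f_{j''}]-\mathbb I[\perp\succ_{w_i}f_{j''}])\big)$,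 $q_{ji}=\frac1n\big(\mathbb I[w_i\succ_{f_j}\perp]+\sum_{i''=1}^n(\mathbb I[w_i\succ_{f_j}w_{i''}]-\mathbb I[\perp\succ_{f_j}w_{i''}])\big)$, and the IR violation $irv(\bm M,\succcurlyeq)=\frac{1}{2n}\sum_{i=1}^n\sum_{j=1}^m M_{ij}\max\{-q_{ji},0\}+\frac{1}{2m}\sum_{i=1}^n\sum_{j=1}^m M_{ij}\max\{-p_{ij},0\}$. *)

theory Defs
  imports Complex_Main
begin

text \<open>Workers are w_1..w_n, represented by Inl i (1 <= i <= n); firms are f_1..f_m,
  represented by Inr j (1 <= j <= m). The option of a worker is a nat option:
  None is the unmatched option, Some j is firm f_j (similarly for firms).
  A preference of an agent is a relation R (as a set of pairs) with (a,b) in R meaning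
  "a is weakly preferred to b"; it is required to be a linear order on the options.\<close>

type_synonym agent = "nat + nat"
type_synonym pref = "(nat option \<times> nat option) set"

definition spref :: "pref \<Rightarrow> nat option \<Rightarrow> nat option \<Rightarrow> bool" where
  "spref R a b \<longleftrightarrow> a \<noteq> b \<and> (a, b) \<in> R"

definition best :: "pref \<Rightarrow> nat option set \<Rightarrow> nat option" where
  "best R S = (THE x. x \<in> S \<and> (\<forall>y\<in>S. (x, y) \<in> R))"

text \<open>State of serial dictatorship: None = not yet assigned; Some None = assigned the
  unmatched option; Some (Some a) = matched with agent a.\<close>
type_synonym sd_state = "agent \<Rightarrow> agent option option"

definition sd_step :: "nat \<Rightarrow> nat \<Rightarrow> (nat \<Rightarrow> pref) \<Rightarrow> (nat \<Rightarrow> pref)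
    \<Rightarrow> agent \<Rightarrow> sd_state \<Rightarrow> sd_state" where
  "sd_step n m Pw Pf a s =
    (if s a \<noteq> None then s else
     (case a of
        Inl i \<Rightarrow>
          (case best (Pw i) (insert None (Some ` {j \<in> {1..m}. s (Inr j) = None})) of
             None \<Rightarrow> s(a := Some None)
           | Some j \<Rightarrow> s(a := Some (Some (Inr j)), Inr j := Some (Some (Inl i))))
      | Inr j \<Rightarrow>
          (case best (Pf j) (insert None (Some ` {i \<in> {1..n}. s (Inl i) = None})) of
             None \<Rightarrow> s(a := Some None)
           | Some i \<Rightarrow> s(a := Some (Some (Inl i)), Inl i := Some (Some (Inr j))))))"

definition serial_dictatorship :: "nat \<Rightarrow> nat \<Rightarrow> (nat \<Rightarrow> pref) \<Rightarrow> (nat \<Rightarrow> pref)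
    \<Rightarrow> agent list \<Rightarrow> sd_state" where
  "serial_dictatorship n m Pw Pf r = fold (sd_step n m Pw Pf) r (\<lambda>_. None)"

text \<open>Matching matrix, indices 1..n+1 and 1..m+1.\<close>
definition matching_matrix :: "nat \<Rightarrow> nat \<Rightarrow> sd_state \<Rightarrow> nat \<Rightarrow> nat \<Rightarrow> real" where
  "matching_matrix n m s i j =
    (if 1 \<le> i \<and> i \<le> n \<and> 1 \<le> j \<and> j \<le> m then
       (if s (Inl i) = Some (Some (Inr j)) then 1 else 0)
     else if 1 \<le> i \<and> i \<le> n \<and> j = m + 1 then
       (if (\<exists>j'. s (Inl i) = Some (Some (Inr j'))) then 0 else 1)
     else if i = n + 1 \<and> 1 \<le> j \<and> j \<le> m then
       (if (\<exists>i'. s (Inr j) = Some (Some (Inl i'))) then 0 else 1)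
     else 0)"

definition ind :: "bool \<Rightarrow> real" where
  "ind b = (if b then 1 else 0)"

definition p_score :: "nat \<Rightarrow> (nat \<Rightarrow> pref) \<Rightarrow> nat \<Rightarrow> nat \<Rightarrow> real" where
  "p_score m Pw i j = (1 / real m) *
     (ind (spref (Pw i) (Some j) None) +
      (\<Sum>j''=1..m. ind (spref (Pw i) (Some j) (Some j'')) - ind (spref (Pw i) None (Some j''))))"

definition q_score :: "nat \<Rightarrow> (nat \<Rightarrow> pref) \<Rightarrow> nat \<Rightarrow> nat \<Rightarrow> real" where
  "q_score n Pf j i = (1 / real n) *
     (ind (spref (Pf j) (Some i) None) +
      (\<Sum>i''=1..n. ind (spref (Pf j) (Some i) (Some i'')) - ind (spref (Pf j) None (Some i''))))"

definition irv :: "nat \<Rightarrow> nat \<Rightarrow> (nat \<Rightarrow> nat \<Rightarrow> real) \<Rightarrow> (nat \<Rightarrow> pref) \<Rightarrow> (nat \<Rightarrow> pref) \<Rightarrow> real" where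
  "irv n m M Pw Pf =
     1 / (2 * real n) * (\<Sum>i=1..n. \<Sum>j=1..m. M i j * max (- q_score n Pf j i) 0)
   + 1 / (2 * real m) * (\<Sum>i=1..n. \<Sum>j=1..m. M i j * max (- p_score m Pw i j) 0)"

end

theory Submission
  imports Defs
begin

text \<open>In serial dictatorship every pair is formed by an agent who chose its partner over
  staying unmatched, so every matched pair is individually rational for at least one side.
  For that side the score is nonnegative, since the partner beats every option that
  \<open>\<bottom>\<close> beats; every score is at least \<open>-1\<close>. Hence a matched pair adds at most
  \<open>max (1/(2n)) (1/(2m)) = 1/(2 min n m)\<close> to the IR violation, and there are at most
  \<open>min n m\<close> matched pairs.\<close>

lemma best_in_and_preferred:
  assumes lin: "linear_order_on A R" and "finite S" "S \<subseteq> A" "S \<noteq> {}"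
  shows "best R S \<in> S \<and> (\<forall>y\<in>S. (best R S, y) \<in> R)"
proof -
  have refl: "refl_on A R" and antisym: "antisym R" and total: "total_on A R"
    using lin by (auto simp: order_on_defs)
  have "wf (Restr R S - Id)"
  proof (rule finite_acyclic_wf)
    show "finite (Restr R S - Id)" using \<open>finite S\<close> by auto
    show "acyclic (Restr R S - Id)"
      by (rule acyclic_subset[OF linear_order_on_acyclic[OF lin]]) auto
  qed
  moreover obtain x0 where "x0 \<in> S" using \<open>S \<noteq> {}\<close> by blast
  ultimately obtain x where x: "x \<in> S" and minimal: "\<And>y. (y, x) \<in> Restr R S - Id \<Longrightarrow> y \<notin> S"
    by (meson wfE_min)
  have x_best: "\<forall>y\<in>S. (x, y) \<in> R"
  proof
    fix y assume "y \<in> S"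
    show "(x, y) \<in> R"
    proof (cases "y = x")
      case True
      then show ?thesis using x refl \<open>S \<subseteq> A\<close> by (auto simp: refl_on_def)
    next
      case False
      then show ?thesis
        using x \<open>y \<in> S\<close> minimal[of y] total \<open>S \<subseteq> A\<close> by (auto simp: total_on_def)
    qed
  qed
  have "best R S = x"
    unfolding best_def
  proof (rule the_equality)
    show "\<And>x'. x' \<in> S \<and> (\<forall>y\<in>S. (x', y) \<in> R) \<Longrightarrow> x' = x"
      using x x_best antisym by (auto dest: antisymD)
  qed (use x x_best in auto)
  then show ?thesis using x x_best by simp
qed

lemma best_insert_None_cases:
  assumes "linear_order_on A R" "finite C" "insert None (Some ` C) \<subseteq> A"
  obtains "best R (insert None (Some ` C)) = None"
    | k where "k \<in> C" "best R (insert None (Some ` C)) = Some k" "spref R (Some k) None"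
proof -
  let ?b = "best R (insert None (Some ` C))"
  have "?b \<in> insert None (Some ` C)" "(?b, None) \<in> R"
    using best_in_and_preferred[OF assms(1) _ assms(3)] assms(2) by auto
  then show ?thesis using that by (cases ?b) (auto simp: spref_def)
qed

definition sd_invariant :: "(nat \<Rightarrow> pref) \<Rightarrow> (nat \<Rightarrow> pref) \<Rightarrow> sd_state \<Rightarrow> bool" where
  "sd_invariant Pw Pf s \<longleftrightarrow>
    (\<forall>i j. s (Inl i) = Some (Some (Inr j)) \<longleftrightarrow> s (Inr j) = Some (Some (Inl i))) \<and>
    (\<forall>i j. s (Inl i) = Some (Some (Inr j)) \<longrightarrow>
       spref (Pw i) (Some j) None \<or> spref (Pf j) (Some i) None)"

lemma sd_invariant_unmatched:
  assumes inv: "sd_invariant Pw Pf s" and unassigned: "s a = None"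
  shows "sd_invariant Pw Pf (s(a := Some None))"
  unfolding sd_invariant_def
proof (intro conjI allI)
  fix i j
  have "s (Inl i) = Some (Some (Inr j)) \<longleftrightarrow> s (Inr j) = Some (Some (Inl i))"
    using inv by (simp add: sd_invariant_def)
  then show "(s(a := Some None)) (Inl i) = Some (Some (Inr j)) \<longleftrightarrow>
      (s(a := Some None)) (Inr j) = Some (Some (Inl i))"
    using unassigned by (cases "a = Inl i"; cases "a = Inr j") auto
  show "(s(a := Some None)) (Inl i) = Some (Some (Inr j)) \<longrightarrow>
      spref (Pw i) (Some j) None \<or> spref (Pf j) (Some i) None"
    using inv by (simp add: sd_invariant_def)
qed

lemma sd_invariant_match:
  assumes inv: "sd_invariant Pw Pf s" and unassigned: "s (Inl i0) = None" "s (Inr j0) = None"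
    and acceptable: "spref (Pw i0) (Some j0) None \<or> spref (Pf j0) (Some i0) None"
  shows "sd_invariant Pw Pf (s(Inl i0 := Some (Some (Inr j0)), Inr j0 := Some (Some (Inl i0))))"
    (is "sd_invariant Pw Pf ?s'")
  unfolding sd_invariant_def
proof (intro conjI allI)
  have sym: "\<And>i j. s (Inl i) = Some (Some (Inr j)) \<longleftrightarrow> s (Inr j) = Some (Some (Inl i))"
    using inv by (simp add: sd_invariant_def)
  fix i j
  show "?s' (Inl i) = Some (Some (Inr j)) \<longleftrightarrow> ?s' (Inr j) = Some (Some (Inl i))"
    using sym[of i j] sym[of i0 j] sym[of i j0] unassigned by (cases "i = i0"; cases "j = j0") auto
  show "?s' (Inl i) = Some (Some (Inr j)) \<longrightarrow>
      spref (Pw i) (Some j) None \<or> spref (Pf j) (Some i) None"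
    using inv acceptable by (cases "i = i0") (auto simp: sd_invariant_def)
qed

lemma sd_invariant_worker_step:
  assumes inv: "sd_invariant Pw Pf s" and unassigned: "s (Inl i) = None"
    and lin: "linear_order_on (insert None (Some ` {1..m})) (Pw i)"
  shows "sd_invariant Pw Pf (sd_step n m Pw Pf (Inl i) s)"
proof -
  let ?C = "{j \<in> {1..m}. s (Inr j) = None}"
  have "insert None (Some ` ?C) \<subseteq> insert None (Some ` {1..m})" by auto
  then show ?thesis
  proof (rule best_insert_None_cases[OF lin, rotated])
    assume "best (Pw i) (insert None (Some ` ?C)) = None"
    then show ?thesis
      using sd_invariant_unmatched[OF inv unassigned] unassigned by (simp add: sd_step_def)
  next
    fix j assume "j \<in> ?C" "best (Pw i) (insert None (Some ` ?C)) = Some j"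
      "spref (Pw i) (Some j) None"
    then show ?thesis
      using sd_invariant_match[OF inv unassigned] unassigned by (simp add: sd_step_def)
  qed simp
qed

lemma sd_invariant_firm_step:
  assumes inv: "sd_invariant Pw Pf s" and unassigned: "s (Inr j) = None"
    and lin: "linear_order_on (insert None (Some ` {1..n})) (Pf j)"
  shows "sd_invariant Pw Pf (sd_step n m Pw Pf (Inr j) s)"
proof -
  let ?C = "{i \<in> {1..n}. s (Inl i) = None}"
  have "insert None (Some ` ?C) \<subseteq> insert None (Some ` {1..n})" by auto
  then show ?thesis
  proof (rule best_insert_None_cases[OF lin, rotated])
    assume "best (Pf j) (insert None (Some ` ?C)) = None"
    then show ?thesis
      using sd_invariant_unmatched[OF inv unassigned] unassigned by (simp add: sd_step_def)
  next
    fix i assume "i \<in> ?C" "best (Pf j) (insert None (Some ` ?C)) = Some i"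
      "spref (Pf j) (Some i) None"
    then show ?thesis
      using sd_invariant_match[OF inv _ unassigned] unassigned
      by (simp add: sd_step_def fun_upd_twist)
  qed simp
qed

lemma sd_invariant_sd_step:
  assumes inv: "sd_invariant Pw Pf s"
    and a: "a \<in> Inl ` {1..n} \<union> Inr ` {1..m}"
    and lin_w: "\<forall>i\<in>{1..n}. linear_order_on (insert None (Some ` {1..m})) (Pw i)"
    and lin_f: "\<forall>j\<in>{1..m}. linear_order_on (insert None (Some ` {1..n})) (Pf j)"
  shows "sd_invariant Pw Pf (sd_step n m Pw Pf a s)"
proof (cases "s a = None")
  case False
  then show ?thesis using inv by (simp add: sd_step_def)
next
  case True
  then show ?thesis
    using a sd_invariant_worker_step[OF inv] sd_invariant_firm_step[OF inv] lin_w lin_f by auto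
qed

lemma sd_invariant_serial_dictatorship:
  assumes "set r \<subseteq> Inl ` {1..n} \<union> Inr ` {1..m}"
    and "\<forall>i\<in>{1..n}. linear_order_on (insert None (Some ` {1..m})) (Pw i)"
    and "\<forall>j\<in>{1..m}. linear_order_on (insert None (Some ` {1..n})) (Pf j)"
  shows "sd_invariant Pw Pf (serial_dictatorship n m Pw Pf r)"
proof -
  have preserved: "sd_invariant Pw Pf (fold (sd_step n m Pw Pf) r s)" if "sd_invariant Pw Pf s" for s
    using assms(1) that
  proof (induction r arbitrary: s)
    case (Cons a r)
    then show ?case using sd_invariant_sd_step[OF _ _ assms(2,3)] by simp
  qed simp
  have "sd_invariant Pw Pf (\<lambda>_. None)" by (simp add: sd_invariant_def)
  then show ?thesis unfolding serial_dictatorship_def by (rule preserved)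
qed

lemma p_score_nonneg:
  assumes "trans (Pw i)" "antisym (Pw i)" and acceptable: "spref (Pw i) (Some j) None"
  shows "0 \<le> p_score m Pw i j"
proof -
  have "ind (spref (Pw i) None (Some k)) \<le> ind (spref (Pw i) (Some j) (Some k))" for k
  proof (cases "spref (Pw i) None (Some k)")
    case True
    then have "spref (Pw i) (Some j) (Some k)"
      using acceptable assms(1,2) unfolding spref_def by (metis antisymD transD)
    then show ?thesis by (simp add: ind_def)
  qed (simp add: ind_def)
  then have "0 \<le> (\<Sum>k=1..m. ind (spref (Pw i) (Some j) (Some k)) - ind (spref (Pw i) None (Some k)))"
    by (intro sum_nonneg) simp
  then show ?thesis by (simp add: p_score_def ind_def)
qed

lemma p_score_ge_minus_one:
  assumes "1 \<le> m"
  shows "-1 \<le> p_score m Pw i j"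
proof -
  have "(\<Sum>k=1..m. - 1) \<le>
      (\<Sum>k=1..m. ind (spref (Pw i) (Some j) (Some k)) - ind (spref (Pw i) None (Some k)))"
    by (intro sum_mono) (simp add: ind_def)
  then have "- real m \<le> ind (spref (Pw i) (Some j) None) +
      (\<Sum>k=1..m. ind (spref (Pw i) (Some j) (Some k)) - ind (spref (Pw i) None (Some k)))"
    by (simp add: ind_def)
  then show ?thesis using assms by (simp add: p_score_def field_simps)
qed

lemma q_score_eq_p_score: "q_score n Pf j i = p_score n Pf j i"
  by (simp add: q_score_def p_score_def)

lemma sum_of_bool_le_one:
  assumes "finite B" and unique: "\<And>x y. x \<in> B \<Longrightarrow> y \<in> B \<Longrightarrow> P x \<Longrightarrow> P y \<Longrightarrow> x = y"
  shows "(\<Sum>x\<in>B. of_bool (P x)) \<le> (1 :: 'a :: linordered_semidom)"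
proof -
  have "card (B \<inter> {x. P x}) \<le> 1"
    using \<open>finite B\<close> unique by (auto simp: card_le_Suc0_iff_eq)
  then show ?thesis using \<open>finite B\<close> by (simp add: sum_of_bool_eq)
qed

lemma double_sum_le_min_card:
  fixes f :: "'a \<Rightarrow> 'b \<Rightarrow> 'c :: linordered_semidom"
  assumes "finite A" "finite B"
    and rows: "\<And>i. i \<in> A \<Longrightarrow> (\<Sum>j\<in>B. f i j) \<le> 1"
    and cols: "\<And>j. j \<in> B \<Longrightarrow> (\<Sum>i\<in>A. f i j) \<le> 1"
  shows "(\<Sum>i\<in>A. \<Sum>j\<in>B. f i j) \<le> of_nat (min (card A) (card B))"
proof -
  have "(\<Sum>i\<in>A. \<Sum>j\<in>B. f i j) \<le> of_nat (card A)"
    using sum_bounded_above[of A "\<lambda>i. \<Sum>j\<in>B. f i j" 1, OF rows] by simp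
  moreover have "(\<Sum>i\<in>A. \<Sum>j\<in>B. f i j) \<le> of_nat (card B)"
    using sum_bounded_above[of B "\<lambda>j. \<Sum>i\<in>A. f i j" 1, OF cols] by (simp add: sum.swap[of _ A])
  ultimately show ?thesis by (simp add: min_def)
qed

lemma irv_le_half:
  assumes "1 \<le> n" "1 \<le> m"
    and order_w: "\<And>i. i \<in> {1..n} \<Longrightarrow> trans (Pw i) \<and> antisym (Pw i)"
    and order_f: "\<And>j. j \<in> {1..m} \<Longrightarrow> trans (Pf j) \<and> antisym (Pf j)"
    and nonneg: "\<And>i j. i \<in> {1..n} \<Longrightarrow> j \<in> {1..m} \<Longrightarrow> 0 \<le> M i j"
    and rows: "\<And>i. i \<in> {1..n} \<Longrightarrow> (\<Sum>j=1..m. M i j) \<le> 1"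
    and cols: "\<And>j. j \<in> {1..m} \<Longrightarrow> (\<Sum>i=1..n. M i j) \<le> 1"
    and acceptable: "\<And>i j. i \<in> {1..n} \<Longrightarrow> j \<in> {1..m} \<Longrightarrow> M i j \<noteq> 0 \<Longrightarrow>
      spref (Pw i) (Some j) None \<or> spref (Pf j) (Some i) None"
  shows "irv n m M Pw Pf \<le> 1 / 2"
proof -
  define c where "c = 1 / (2 * real (min n m))"
  have c_ge: "1 / (2 * real n) \<le> c" "1 / (2 * real m) \<le> c"
    using assms(1,2) by (auto simp: c_def frac_le min_def)
  have entry: "M i j * max (- q_score n Pf j i) 0 / (2 * real n)
      + M i j * max (- p_score m Pw i j) 0 / (2 * real m) \<le> M i j * c"
    if i: "i \<in> {1..n}" and j: "j \<in> {1..m}" for i j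
  proof (cases "M i j = 0")
    case False
    let ?a = "max (- q_score n Pf j i) 0" and ?b = "max (- p_score m Pw i j) 0"
    have "?a \<le> 1" "?b \<le> 1"
      using p_score_ge_minus_one[OF assms(1), of Pf j i] p_score_ge_minus_one[OF assms(2), of Pw i j]
      by (auto simp: q_score_eq_p_score)
    moreover have "?a = 0 \<or> ?b = 0"
      using acceptable[OF i j False] p_score_nonneg[of Pw i] p_score_nonneg[of Pf j] order_w[OF i] order_f[OF j]
      by (auto simp: q_score_eq_p_score)
    moreover have "?a / (2 * real n) \<le> 1 / (2 * real n)" if "?a \<le> 1"
      using that by (simp add: divide_right_mono)
    moreover have "?b / (2 * real m) \<le> 1 / (2 * real m)" if "?b \<le> 1"
      using that by (simp add: divide_right_mono)
    ultimately have "?a / (2 * real n) + ?b / (2 * real m) \<le> c"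
      using c_ge by auto
    from mult_left_mono[OF this nonneg[OF i j]] show ?thesis
      by (simp add: distrib_left)
  qed simp
  have "irv n m M Pw Pf = (\<Sum>i=1..n. \<Sum>j=1..m. M i j * max (- q_score n Pf j i) 0 / (2 * real n)
      + M i j * max (- p_score m Pw i j) 0 / (2 * real m))"
    by (simp add: irv_def sum_distrib_left sum.distrib)
  also have "\<dots> \<le> (\<Sum>i=1..n. \<Sum>j=1..m. M i j) * c"
    unfolding sum_distrib_right by (intro sum_mono entry)
  also have "\<dots> \<le> real (min n m) * c"
    using double_sum_le_min_card[of "{1..n}" "{1..m}" M] rows cols
    by (intro mult_right_mono) (auto simp: c_def)
  also have "\<dots> = 1 / 2"
    using assms(1,2) by (simp add: c_def)
  finally show ?thesis .
qed

lemma matching_matrix_worker_firm: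
  assumes "i \<in> {1..n}" "j \<in> {1..m}"
  shows "matching_matrix n m s i j = of_bool (s (Inl i) = Some (Some (Inr j)))"
  using assms by (simp add: matching_matrix_def)

lemma matching_matrix_row_sum_le_one:
  assumes "i \<in> {1..n}"
  shows "(\<Sum>j=1..m. matching_matrix n m s i j) \<le> 1"
proof -
  have "(\<Sum>j=1..m. matching_matrix n m s i j) = (\<Sum>j=1..m. of_bool (s (Inl i) = Some (Some (Inr j))))"
    using assms by (intro sum.cong) (simp_all add: matching_matrix_worker_firm)
  also have "\<dots> \<le> 1"
    by (rule sum_of_bool_le_one) auto
  finally show ?thesis .
qed

lemma matching_matrix_col_sum_le_one:
  assumes "sd_invariant Pw Pf s" "j \<in> {1..m}"
  shows "(\<Sum>i=1..n. matching_matrix n m s i j) \<le> 1"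
proof -
  have "(\<Sum>i=1..n. matching_matrix n m s i j) = (\<Sum>i=1..n. of_bool (s (Inr j) = Some (Some (Inl i))))"
    using assms by (intro sum.cong) (simp_all add: matching_matrix_worker_firm sd_invariant_def)
  also have "\<dots> \<le> 1"
    by (rule sum_of_bool_le_one) auto
  finally show ?thesis .
qed

theorem proposition2:
  fixes n m :: nat and Pw Pf :: "nat \<Rightarrow> pref" and r :: "agent list"
  assumes "n \<ge> 1" and "m \<ge> 1"
    and "\<forall>i\<in>{1..n}. linear_order_on (insert None (Some ` {1..m})) (Pw i)"
    and "\<forall>j\<in>{1..m}. linear_order_on (insert None (Some ` {1..n})) (Pf j)"
    and "distinct r" and "set r = Inl ` {1..n} \<union> Inr ` {1..m}"
  shows "irv n m (matching_matrix n m (serial_dictatorship n m Pw Pf r)) Pw Pf \<le> 1 / 2"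
proof -
  let ?s = "serial_dictatorship n m Pw Pf r"
  have inv: "sd_invariant Pw Pf ?s"
    using sd_invariant_serial_dictatorship assms(3,4,6) by blast
  show ?thesis
  proof (rule irv_le_half)
    show "trans (Pw i) \<and> antisym (Pw i)" if "i \<in> {1..n}" for i
      using assms(3) that by (auto simp: order_on_defs)
    show "trans (Pf j) \<and> antisym (Pf j)" if "j \<in> {1..m}" for j
      using assms(4) that by (auto simp: order_on_defs)
    show "spref (Pw i) (Some j) None \<or> spref (Pf j) (Some i) None"
      if "i \<in> {1..n}" "j \<in> {1..m}" "matching_matrix n m ?s i j \<noteq> 0" for i j
      using inv that by (simp add: matching_matrix_worker_firm sd_invariant_def)
    show "0 \<le> matching_matrix n m ?s i j" for i j
      by (simp add: matching_matrix_def)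
    show "(\<Sum>j=1..m. matching_matrix n m ?s i j) \<le> 1" if "i \<in> {1..n}" for i
      using that by (rule matching_matrix_row_sum_le_one)
    show "(\<Sum>i=1..n. matching_matrix n m ?s i j) \<le> 1" if "j \<in> {1..m}" for j
      using inv that by (rule matching_matrix_col_sum_le_one)
  qed (use assms(1,2) in auto)
qed

end
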